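(* Let $f:\mathbb{R}^n\times\mathbb{R}^m\to\mathbb{R}$ and $g:\mathbb{R}^n\times\mathbb{R}^m\to\mathbb{R}^p$ belong to $\mathcal{C}^{0,2}(\mathbb{R}^n\times\mathbb{R}^m)$. Assume that for every $x\in\mathbb{R}^n$, $f(x,\cdot)$ is strictly convex, $g(x,\cdot)$ is convex (componentwise), and the problem $\min_{u\in\mathbb{R}^m} f(x,u)$ subject to $g(x,u)\le 0$ has at least one minimizer; let $u^*(x)$ denote the (unique) minimizer. Assume Slater's condition holds at $x_0\in\mathbb{R}^n$, i.e., there exists $\hat u$ with $g_i(x_0,\hat u)<0$ for all $i\in\{1,\dots,p\}$. Let $F:\mathbb{R}^n\times\mathbb{R}^m\to\mathbb{R}^n$ be locally Lipschitz. Then there exists $\delta_0>0$ such that the differential equation $\dot x=F(x,u^*(x))$ has at least one (classical) solution $x:(-\delta_0,\delta_0)\to\mathbb{R}^n$ with $x(0)=x_0$.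
   Context: A function $\varphi:\mathbb{R}^n\times\mathbb{R}^m\to\mathbb{R}^d$, $(x,u)\mapsto\varphi(x,u)$, belongs to $\mathcal{C}^{0,2}(\mathbb{R}^n\times\mathbb{R}^m)$ if $\varphi$ is continuous and the partial derivatives of $\varphi$ with respect to $u$ of order up to $2$ exist and are continuous jointly in $(x,u)$. *)

theory Defs
  imports "HOL-Analysis.Analysis"
begin

definition C0_2 :: "(real^'n \<Rightarrow> real^'m \<Rightarrow> 'd::real_normed_vector) \<Rightarrow> bool" where
  "C0_2 \<phi> \<longleftrightarrow>
     continuous_on UNIV (\<lambda>z. \<phi> (fst z) (snd z)) \<and>
     (\<exists>D1 D2.
        (\<forall>x u j. ((\<lambda>t. \<phi> x (u + t *\<^sub>R axis j 1)) has_vector_derivative D1 j x u) (at 0)) \<and>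
        (\<forall>x u j k. ((\<lambda>t. D1 j x (u + t *\<^sub>R axis k 1)) has_vector_derivative D2 j k x u) (at 0)) \<and>
        (\<forall>j. continuous_on UNIV (\<lambda>z. D1 j (fst z) (snd z))) \<and>
        (\<forall>j k. continuous_on UNIV (\<lambda>z. D2 j k (fst z) (snd z))))"

definition strictly_convex_on :: "'a::real_vector set \<Rightarrow> ('a \<Rightarrow> real) \<Rightarrow> bool" where
  "strictly_convex_on S h \<longleftrightarrow> convex S \<and>
     (\<forall>x\<in>S. \<forall>y\<in>S. \<forall>t::real. x \<noteq> y \<and> 0 < t \<and> t < 1 \<longrightarrow>
        h ((1 - t) *\<^sub>R x + t *\<^sub>R y) < (1 - t) * h x + t * h y)"

definition is_minimizer ::
  "(real^'n \<Rightarrow> real^'m \<Rightarrow> real) \<Rightarrow> (real^'n \<Rightarrow> real^'m \<Rightarrow> real^'p) \<Rightarrow> real^'n \<Rightarrow> real^'m \<Rightarrow> bool" where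
  "is_minimizer f g x u \<longleftrightarrow> (\<forall>i. g x u $ i \<le> 0) \<and>
     (\<forall>v. (\<forall>i. g x v $ i \<le> 0) \<longrightarrow> f x u \<le> f x v)"

definition locally_lipschitz :: "('a::metric_space \<Rightarrow> 'b::metric_space) \<Rightarrow> bool" where
  "locally_lipschitz h \<longleftrightarrow> (\<forall>z. \<exists>r>0. \<exists>L. \<forall>z1\<in>ball z r. \<forall>z2\<in>ball z r.
      dist (h z1) (h z2) \<le> L * dist z1 z2)"

end

theory Submission
  imports Defs
begin

text \<open>
  Slater's condition persists for x near x0. There every feasible point is a limit of strictly
  feasible ones, strict feasibility survives small changes of x, and by strict convexity every
  feasible point on a small sphere around the unique minimizer u*(x) is strictly worse than u*(x).
  By compactness of the sphere this margin is uniform for nearby parameters, and convexity then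
  traps their minimizers inside the sphere; so u* is continuous near x0, hence so is
  x \<mapsto> F(x, u*(x)), and Peano's theorem applies. Peano's theorem is proved with Euler polygons:
  by Tychonoff's theorem they have a pointwise cluster point, and the uniform continuity of the
  vector field shows that this cluster point has the right derivative.
\<close>

lemma strictly_convex_on_imp_convex_on:
  assumes "strictly_convex_on S h"
  shows "convex_on S h"
proof (rule convex_onI)
  show "convex S" using assms unfolding strictly_convex_on_def by blast
  fix t :: real and x y assume "0 < t" "t < 1" "x \<in> S" "y \<in> S"
  show "h ((1 - t) *\<^sub>R x + t *\<^sub>R y) \<le> (1 - t) * h x + t * h y"
  proof (cases "x = y")
    case True
    then show ?thesis by (simp add: algebra_simps)
  next
    case False
    then show ?thesis using assms \<open>0 < t\<close> \<open>t < 1\<close> \<open>x \<in> S\<close> \<open>y \<in> S\<close>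
      unfolding strictly_convex_on_def by (simp add: less_imp_le)
  qed
qed

lemma strictly_convex_on_minimizer_less:
  assumes "strictly_convex_on S h" "convex C" "C \<subseteq> S"
    and "u \<in> C" "\<forall>w\<in>C. h u \<le> h w" "v \<in> C" "v \<noteq> u"
  shows "h u < h v"
proof -
  have strict: "h ((1 - t) *\<^sub>R x + t *\<^sub>R y) < (1 - t) * h x + t * h y"
    if "x \<in> S" "y \<in> S" "x \<noteq> y" "0 < t" "t < 1" for x y t
    using assms(1) that unfolding strictly_convex_on_def by blast
  define m where "m = (1 - 1/2) *\<^sub>R u + (1/2::real) *\<^sub>R v"
  have "m \<in> C" using assms(2,4,6) unfolding m_def by (intro convexD) auto
  then have "h u \<le> h m" using assms(5) by blast
  also have "h m < (1 - 1/2) * h u + (1/2) * h v"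
    unfolding m_def using assms(3,4,6,7) by (intro strict) auto
  finally show ?thesis by simp
qed

lemma convex_on_minimizer_in_ball:
  fixes h :: "'a::real_normed_vector \<Rightarrow> real"
  assumes "convex_on C h" and "u \<in> C" "\<forall>v\<in>C. h u \<le> h v"
    and "w \<in> C" "dist w c < \<epsilon>" "\<forall>v\<in>C. dist v c = \<epsilon> \<longrightarrow> h w < h v"
  shows "dist u c < \<epsilon>"
proof (rule ccontr)
  assume "\<not> dist u c < \<epsilon>"
  define \<phi> where "\<phi> = (\<lambda>\<theta>::real. dist ((1 - \<theta>) *\<^sub>R w + \<theta> *\<^sub>R u) c)"
  have "continuous_on {0..1} \<phi>" unfolding \<phi>_def by (intro continuous_intros)
  moreover have "\<phi> 0 \<le> \<epsilon>" "\<epsilon> \<le> \<phi> 1" using assms(5) \<open>\<not> dist u c < \<epsilon>\<close> unfolding \<phi>_def by simp_all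
  ultimately obtain \<theta> where \<theta>: "0 \<le> \<theta>" "\<theta> \<le> 1" "\<phi> \<theta> = \<epsilon>"
    using IVT'[of \<phi> 0 \<epsilon> 1] by auto
  define v where "v = (1 - \<theta>) *\<^sub>R w + \<theta> *\<^sub>R u"
  have "convex C" using assms(1) by (rule convex_on_imp_convex)
  then have "v \<in> C" using assms(2,4) \<theta> unfolding v_def by (intro convexD) auto
  have "h v \<le> max (h w) (h u)"
    using convex_lower[OF assms(1,4,2)] \<theta> unfolding v_def by simp
  also have "\<dots> = h w" using assms(3,4) by (simp add: max_absorb1)
  finally show False using assms(6) \<open>v \<in> C\<close> \<theta>(3) unfolding \<phi>_def v_def by fastforce
qed

lemma convex_componentwise_sublevel:
  fixes g :: "'a::real_vector \<Rightarrow> real^'p"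
  assumes "\<forall>i. convex_on UNIV (\<lambda>u. g u $ i)"
  shows "convex {u. \<forall>i. g u $ i \<le> 0}"
proof (rule convexI)
  fix x y :: 'a and a b :: real
  assume "x \<in> {u. \<forall>i. g u $ i \<le> 0}" "y \<in> {u. \<forall>i. g u $ i \<le> 0}" "0 \<le> a" "0 \<le> b" "a + b = 1"
  have "g (a *\<^sub>R x + b *\<^sub>R y) $ i \<le> 0" for i
  proof -
    have "g (a *\<^sub>R x + b *\<^sub>R y) $ i \<le> a * g x $ i + b * g y $ i"
      using assms \<open>0 \<le> a\<close> \<open>0 \<le> b\<close> \<open>a + b = 1\<close> unfolding convex_on_def by blast
    also have "\<dots> \<le> 0"
      using \<open>0 \<le> a\<close> \<open>0 \<le> b\<close> \<open>x \<in> _\<close> \<open>y \<in> _\<close> by (simp add: add_nonpos_nonpos mult_nonneg_nonpos)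
    finally show ?thesis .
  qed
  then show "a *\<^sub>R x + b *\<^sub>R y \<in> {u. \<forall>i. g u $ i \<le> 0}" by simp
qed

lemma feasible_in_closure_strictly_feasible:
  fixes g :: "'a::real_normed_vector \<Rightarrow> real^'p"
  assumes "\<forall>i. convex_on UNIV (\<lambda>u. g u $ i)" "\<forall>i. g uh $ i < 0" "\<forall>i. g u $ i \<le> 0"
  shows "u \<in> closure {v. \<forall>i. g v $ i < 0}"
proof (rule Lim_in_closed_set)
  let ?w = "\<lambda>s::real. (1 - s) *\<^sub>R u + s *\<^sub>R uh"
  show "(?w \<longlongrightarrow> u) (at_right 0)"
    by (auto intro!: tendsto_eq_intros)
  have "\<forall>i. g (?w s) $ i < 0" if "0 < s" "s < 1" for s
  proof
    fix i
    have "g (?w s) $ i \<le> (1 - s) * g u $ i + s * g uh $ i"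
      using that assms(1) by (intro convex_onD) auto
    also have "\<dots> < 0"
      using that assms(2,3) by (smt (verit) mult_nonneg_nonpos mult_pos_neg)
    finally show "g (?w s) $ i < 0" .
  qed
  then show "\<forall>\<^sub>F s in at_right 0. ?w s \<in> closure {v. \<forall>i. g v $ i < 0}"
    unfolding eventually_at_right_field by (intro exI[of _ 1]) (auto intro!: closure_subset[THEN subsetD])
qed (auto simp: trivial_limit_at_right_real)

lemma strictly_feasible_near_feasible:
  fixes g :: "'a::real_normed_vector \<Rightarrow> real^'p" and h :: "'a \<Rightarrow> real"
  assumes "\<forall>i. convex_on UNIV (\<lambda>u. g u $ i)" "\<forall>i. g uh $ i < 0" "\<forall>i. g u $ i \<le> 0"
    and "continuous_on UNIV h" "0 < \<epsilon>" "0 < \<mu>"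
  obtains w where "\<forall>i. g w $ i < 0" "dist w u < \<epsilon>" "h w < h u + \<mu>"
proof -
  have "u \<in> closure {v. \<forall>i. g v $ i < 0}"
    using assms(1-3) by (rule feasible_in_closure_strictly_feasible)
  moreover have "open {v. dist v u < \<epsilon> \<and> h v < h u + \<mu>}"
    using assms(4) by (intro open_Collect_conj open_Collect_less continuous_intros)
  moreover have "u \<in> {v. dist v u < \<epsilon> \<and> h v < h u + \<mu>}"
    using assms(5,6) by simp
  ultimately show ?thesis
    using that open_Int_closure_eq_empty by blast
qed

lemma continuous_on_uncurried_fix_fst:
  assumes "continuous_on UNIV (\<lambda>z. \<phi> (fst z) (snd z))"
  shows "continuous_on UNIV (\<phi> x)"
  using continuous_on_compose2[OF assms, of UNIV "\<lambda>v. (x, v)"]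
  by (simp add: continuous_on_Pair)

lemma continuous_on_uncurried_fix_snd:
  assumes "continuous_on UNIV (\<lambda>z. \<phi> (fst z) (snd z))"
  shows "continuous_on UNIV (\<lambda>x. \<phi> x v)"
  using continuous_on_compose2[OF assms, of UNIV "\<lambda>x. (x, v)"]
  by (simp add: continuous_on_Pair)

lemma eventually_nhds_less_uncurried:
  fixes \<phi> :: "'a::topological_space \<Rightarrow> 'b::topological_space \<Rightarrow> real"
  assumes "continuous_on UNIV (\<lambda>z. \<phi> (fst z) (snd z))" "\<phi> x1 v < c"
  shows "\<forall>\<^sub>F x in nhds x1. \<phi> x v < c"
proof -
  have "open {x. \<phi> x v < c}"
    using continuous_on_uncurried_fix_snd[OF assms(1)] by (intro open_Collect_less continuous_intros)
  then show ?thesis using assms(2) unfolding eventually_nhds by blast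
qed

lemma eventually_nhds_strictly_feasible:
  fixes g :: "'a::topological_space \<Rightarrow> 'b::topological_space \<Rightarrow> real^'p"
  assumes "continuous_on UNIV (\<lambda>z. g (fst z) (snd z))" "\<forall>i. g x1 u $ i < 0"
  shows "\<forall>\<^sub>F x in nhds x1. \<forall>i. g x u $ i < 0"
proof (rule eventually_all_finite)
  fix i
  show "\<forall>\<^sub>F x in nhds x1. g x u $ i < 0"
    by (rule eventually_nhds_less_uncurried[where \<phi> = "\<lambda>x v. g x v $ i"])
      (use assms in \<open>auto intro: continuous_on_component\<close>)
qed

lemma eventually_nhds_uniformly_positive:
  fixes \<Phi> :: "'a::topological_space \<times> 'b::topological_space \<Rightarrow> real"
  assumes "continuous_on UNIV \<Phi>" "compact S" "\<forall>v\<in>S. 0 < \<Phi> (x1, v)"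
  obtains \<mu> where "0 < \<mu>" "\<forall>\<^sub>F x in nhds x1. \<forall>v\<in>S. \<mu> < \<Phi> (x, v)"
proof (cases "S = {}")
  case True
  then show ?thesis using that[of 1] by simp
next
  case False
  have "continuous_on S (\<lambda>v. \<Phi> (x1, v))"
    by (rule continuous_on_compose2[OF assms(1)]) (simp_all add: continuous_on_Pair)
  then obtain v0 where "v0 \<in> S" and v0: "\<forall>v\<in>S. \<Phi> (x1, v0) \<le> \<Phi> (x1, v)"
    using continuous_attains_inf[OF assms(2) False] by blast
  define \<mu> where "\<mu> = \<Phi> (x1, v0) / 2"
  have "0 < \<mu>" using assms(3) \<open>v0 \<in> S\<close> unfolding \<mu>_def by simp
  have W_open: "open {z. \<mu> < \<Phi> z}"
    using assms(1) by (intro open_Collect_less continuous_intros)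
  have W_tube: "{x1} \<times> S \<subseteq> {z. \<mu> < \<Phi> z}"
  proof (intro subsetI)
    fix z assume "z \<in> {x1} \<times> S"
    then obtain v where "z = (x1, v)" "v \<in> S" by blast
    then have "\<Phi> (x1, v0) \<le> \<Phi> z" using v0 by blast
    then show "z \<in> {z. \<mu> < \<Phi> z}" using \<open>0 < \<mu>\<close> unfolding \<mu>_def by simp
  qed
  obtain X0 where "open X0" "x1 \<in> X0" and X0: "X0 \<times> S \<subseteq> {z. \<mu> < \<Phi> z}"
    using Elementary_Topology.tube_lemma[OF assms(2) W_open W_tube] by auto
  have "\<forall>\<^sub>F x in nhds x1. \<forall>v\<in>S. \<mu> < \<Phi> (x, v)"
    using eventually_nhds_in_open[OF \<open>open X0\<close> \<open>x1 \<in> X0\<close>] by (rule eventually_mono) (use X0 in auto)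
  with \<open>0 < \<mu>\<close> show ?thesis by (rule that)
qed

lemma eventually_nhds_feasible_sphere_margin:
  fixes f :: "'a::topological_space \<Rightarrow> 'b::euclidean_space \<Rightarrow> real" and g :: "'a \<Rightarrow> 'b \<Rightarrow> real^'p"
  assumes cf: "continuous_on UNIV (\<lambda>z. f (fst z) (snd z))"
    and cg: "continuous_on UNIV (\<lambda>z. g (fst z) (snd z))"
    and sc: "strictly_convex_on UNIV (f x1)" and cv: "\<forall>i. convex_on UNIV (\<lambda>u. g x1 u $ i)"
    and u1: "\<forall>i. g x1 u1 $ i \<le> 0" "\<forall>v. (\<forall>i. g x1 v $ i \<le> 0) \<longrightarrow> f x1 u1 \<le> f x1 v"
    and "0 < \<epsilon>"
  obtains \<mu> where "0 < \<mu>"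
    "\<forall>\<^sub>F x in nhds x1. \<forall>v. dist v u1 = \<epsilon> \<longrightarrow> (\<forall>i. g x v $ i \<le> 0) \<longrightarrow> f x1 u1 + \<mu> < f x v"
proof -
  txt \<open>\<Phi> (x, v) \<le> 0 iff v is feasible at x and f x v \<le> f x1 u1.\<close>
  define \<Phi> where "\<Phi> z = max (f (fst z) (snd z) - f x1 u1) (\<Sum>i\<in>UNIV. max 0 (g (fst z) (snd z) $ i))" for z
  have "continuous_on UNIV \<Phi>"
    unfolding \<Phi>_def by (intro continuous_intros cf cg)
  have \<Phi>_feasible: "\<Phi> (x, v) = max (f x v - f x1 u1) 0" if "\<forall>i. g x v $ i \<le> 0" for x v
    using that unfolding \<Phi>_def by (simp add: max_absorb1)
  have "0 < \<Phi> (x1, v)" if "v \<in> sphere u1 \<epsilon>" for v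
  proof (cases "\<forall>i. g x1 v $ i \<le> 0")
    case True
    have "v \<noteq> u1" using that \<open>0 < \<epsilon>\<close> by auto
    then have "f x1 u1 < f x1 v"
      using strictly_convex_on_minimizer_less[OF sc convex_componentwise_sublevel[OF cv]] u1 True
      by blast
    then show ?thesis using \<Phi>_feasible[OF True] by simp
  next
    case False
    then obtain i where "0 < g x1 v $ i" by (auto simp: not_le)
    moreover have "max 0 (g x1 v $ i) \<le> (\<Sum>i\<in>UNIV. max 0 (g x1 v $ i))"
      by (rule member_le_sum) auto
    ultimately show ?thesis unfolding \<Phi>_def by simp
  qed
  then obtain \<mu> where "0 < \<mu>" and \<mu>: "\<forall>\<^sub>F x in nhds x1. \<forall>v\<in>sphere u1 \<epsilon>. \<mu> < \<Phi> (x, v)"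
    using eventually_nhds_uniformly_positive[OF \<open>continuous_on UNIV \<Phi>\<close> compact_sphere] by blast
  have "\<forall>\<^sub>F x in nhds x1. \<forall>v. dist v u1 = \<epsilon> \<longrightarrow> (\<forall>i. g x v $ i \<le> 0) \<longrightarrow> f x1 u1 + \<mu> < f x v"
    using \<mu>
  proof eventually_elim
    case (elim x)
    show ?case
    proof (intro allI impI)
      fix v assume "dist v u1 = \<epsilon>" "\<forall>i. g x v $ i \<le> 0"
      then have "v \<in> sphere u1 \<epsilon>" by (simp add: dist_commute)
      then have "\<mu> < \<Phi> (x, v)" using elim by blast
      then have "\<mu> < max (f x v - f x1 u1) 0" using \<Phi>_feasible \<open>\<forall>i. g x v $ i \<le> 0\<close> by simp
      then show "f x1 u1 + \<mu> < f x v" using \<open>0 < \<mu>\<close> by linarith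
    qed
  qed
  with \<open>0 < \<mu>\<close> show ?thesis by (rule that)
qed

lemma isCont_convex_minimizer:
  fixes f :: "'a::t2_space \<Rightarrow> 'b::euclidean_space \<Rightarrow> real" and g :: "'a \<Rightarrow> 'b \<Rightarrow> real^'p"
  assumes cf: "continuous_on UNIV (\<lambda>z. f (fst z) (snd z))"
    and cg: "continuous_on UNIV (\<lambda>z. g (fst z) (snd z))"
    and sc: "\<forall>x. strictly_convex_on UNIV (f x)" and cv: "\<forall>x i. convex_on UNIV (\<lambda>u. g x u $ i)"
    and feasible: "\<forall>x i. g x (ustar x) $ i \<le> 0"
    and minimal: "\<forall>x v. (\<forall>i. g x v $ i \<le> 0) \<longrightarrow> f x (ustar x) \<le> f x v"
    and slater: "\<forall>i. g x1 uh $ i < 0"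
  shows "isCont ustar x1"
  unfolding isCont_def tendsto_iff
proof (intro allI impI)
  fix \<epsilon> :: real assume "0 < \<epsilon>"
  define u1 where "u1 = ustar x1"
  obtain \<mu> where "0 < \<mu>" and margin:
    "\<forall>\<^sub>F x in nhds x1. \<forall>v. dist v u1 = \<epsilon> \<longrightarrow> (\<forall>i. g x v $ i \<le> 0) \<longrightarrow> f x1 u1 + \<mu> < f x v"
    unfolding u1_def
    by (rule eventually_nhds_feasible_sphere_margin[OF cf cg spec[OF sc] spec[OF cv] spec[OF feasible]
          spec[OF minimal] \<open>0 < \<epsilon>\<close>])
  obtain w where w: "\<forall>i. g x1 w $ i < 0" "dist w u1 < \<epsilon>" "f x1 w < f x1 u1 + \<mu>"
    unfolding u1_def
    by (rule strictly_feasible_near_feasible[OF spec[OF cv, of x1] slater spec[OF feasible, of x1]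
          continuous_on_uncurried_fix_fst[OF cf] \<open>0 < \<epsilon>\<close> \<open>0 < \<mu>\<close>])
  have "\<forall>\<^sub>F x in nhds x1. (\<forall>v. dist v u1 = \<epsilon> \<longrightarrow> (\<forall>i. g x v $ i \<le> 0) \<longrightarrow> f x1 u1 + \<mu> < f x v)
      \<and> (\<forall>i. g x w $ i < 0) \<and> f x w < f x1 u1 + \<mu>"
    using margin eventually_nhds_strictly_feasible[OF cg w(1)] eventually_nhds_less_uncurried[OF cf w(3)]
    by (intro eventually_conj)
  then have "\<forall>\<^sub>F x in at x1. (\<forall>v. dist v u1 = \<epsilon> \<longrightarrow> (\<forall>i. g x v $ i \<le> 0) \<longrightarrow> f x1 u1 + \<mu> < f x v)
      \<and> (\<forall>i. g x w $ i < 0) \<and> f x w < f x1 u1 + \<mu>"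
    by (simp add: eventually_nhds_conv_at)
  then show "\<forall>\<^sub>F x in at x1. dist (ustar x) (ustar x1) < \<epsilon>"
  proof eventually_elim
    case (elim x)
    define C where "C = {v. \<forall>i. g x v $ i \<le> 0}"
    have "convex C" unfolding C_def by (rule convex_componentwise_sublevel[OF spec[OF cv]])
    then have "convex_on C (f x)"
      by (rule convex_on_subset[OF strictly_convex_on_imp_convex_on[OF spec[OF sc]] subset_UNIV])
    moreover have "ustar x \<in> C" unfolding C_def using feasible by simp
    moreover have "\<forall>v\<in>C. f x (ustar x) \<le> f x v" unfolding C_def using minimal by simp
    moreover have "w \<in> C" using elim unfolding C_def by (simp add: less_imp_le)
    moreover note \<open>dist w u1 < \<epsilon>\<close>
    moreover have "\<forall>v\<in>C. dist v u1 = \<epsilon> \<longrightarrow> f x w < f x v"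
    proof (intro ballI impI)
      fix v assume "v \<in> C" "dist v u1 = \<epsilon>"
      then have "f x1 u1 + \<mu> < f x v" using elim unfolding C_def by blast
      then show "f x w < f x v" using elim by linarith
    qed
    ultimately have "dist (ustar x) u1 < \<epsilon>" by (rule convex_on_minimizer_in_ball)
    then show ?case unfolding u1_def .
  qed
qed

lemma locally_lipschitz_imp_isCont:
  assumes "locally_lipschitz h"
  shows "isCont h z"
proof -
  obtain r L where "r > 0" and L: "\<forall>z1\<in>ball z r. \<forall>z2\<in>ball z r. dist (h z1) (h z2) \<le> L * dist z1 z2"
    using assms unfolding locally_lipschitz_def by blast
  have "(max 0 L)-lipschitz_on (ball z r) h"
  proof (rule lipschitz_onI)
    fix z1 z2 assume "z1 \<in> ball z r" "z2 \<in> ball z r"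
    then have "dist (h z1) (h z2) \<le> L * dist z1 z2" using L by blast
    also have "\<dots> \<le> max 0 L * dist z1 z2" by (intro mult_right_mono) auto
    finally show "dist (h z1) (h z2) \<le> max 0 L * dist z1 z2" .
  qed simp
  then have "continuous_on (ball z r) h" by (rule lipschitz_on_continuous_on)
  then show ?thesis using \<open>r > 0\<close> by (intro continuous_on_interior) auto
qed

primrec euler_iter :: "('a::real_normed_vector \<Rightarrow> 'a) \<Rightarrow> real \<Rightarrow> 'a \<Rightarrow> nat \<Rightarrow> 'a" where
  "euler_iter G h x0 0 = x0"
| "euler_iter G h x0 (Suc l) = euler_iter G h x0 l + h *\<^sub>R G (euler_iter G h x0 l)"

lemma euler_iter_diff:
  assumes "i \<le> j"
  shows "euler_iter G h x0 j - euler_iter G h x0 i = (\<Sum>l\<in>{i..<j}. h *\<^sub>R G (euler_iter G h x0 l))"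
  using assms by (induction j rule: dec_induct) (simp_all add: sum.atLeastLessThan_Suc)

lemma euler_iter_deviation:
  assumes "0 \<le> h" and dev: "\<And>l. min i j \<le> l \<Longrightarrow> l < max i j \<Longrightarrow> norm (G (euler_iter G h x0 l) - c) \<le> \<omega>"
  shows "norm (euler_iter G h x0 j - euler_iter G h x0 i - ((real j - real i) * h) *\<^sub>R c)
           \<le> \<bar>real j - real i\<bar> * h * \<omega>"
proof -
  let ?E = "euler_iter G h x0"
  have ordered: "norm (?E b - ?E a - ((real b - real a) * h) *\<^sub>R c) \<le> (real b - real a) * h * \<omega>"
    if "a \<le> b" "min i j = a" "max i j = b" for a b
  proof -
    have "?E b - ?E a - ((real b - real a) * h) *\<^sub>R c = (\<Sum>l\<in>{a..<b}. h *\<^sub>R (G (?E l) - c))"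
      using \<open>a \<le> b\<close>
      by (simp add: euler_iter_diff scaleR_diff_right sum_subtractf of_nat_diff flip: scaleR_sum_left)
    also have "norm \<dots> \<le> (\<Sum>l\<in>{a..<b}. h * \<omega>)"
      by (rule sum_norm_le) (use assms that in \<open>auto intro: mult_left_mono\<close>)
    also have "\<dots> = (real b - real a) * h * \<omega>" using \<open>a \<le> b\<close> by (simp add: of_nat_diff)
    finally show ?thesis .
  qed
  show ?thesis
  proof (cases "i \<le> j")
    case True
    then show ?thesis using ordered[of i j] by simp
  next
    case False
    have "?E j - ?E i - ((real j - real i) * h) *\<^sub>R c = - (?E i - ?E j - ((real i - real j) * h) *\<^sub>R c)"
      by (simp add: algebra_simps)
    then show ?thesis using ordered[of j i] False by (simp only: norm_minus_cancel) simp
  qed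
qed

lemma dist_euler_iter_le:
  assumes "\<forall>x\<in>cball x0 R. norm (G x) \<le> M" "0 \<le> h" "0 \<le> M" "real l * h * M \<le> R"
  shows "dist x0 (euler_iter G h x0 l) \<le> real l * h * M"
  using assms(4)
proof (induction l)
  case (Suc l)
  have "real (Suc l) * h * M = real l * h * M + h * M" by (simp add: algebra_simps)
  moreover have "0 \<le> h * M" using assms(2,3) by simp
  ultimately have "real l * h * M \<le> R" using Suc.prems by linarith
  then have IH: "dist x0 (euler_iter G h x0 l) \<le> real l * h * M" by (rule Suc.IH)
  then have "norm (G (euler_iter G h x0 l)) \<le> M"
    using assms(1) \<open>real l * h * M \<le> R\<close> by simp
  then have "norm (h *\<^sub>R G (euler_iter G h x0 l)) \<le> h * M"
    using assms(2) by (simp add: mult_left_mono)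
  moreover have "dist (euler_iter G h x0 l) (euler_iter G h x0 (Suc l)) = norm (h *\<^sub>R G (euler_iter G h x0 l))"
    by (simp add: dist_norm)
  ultimately show ?case
    using IH dist_triangle[of x0 "euler_iter G h x0 (Suc l)" "euler_iter G h x0 l"]
    by (simp add: algebra_simps)
qed simp

lemma nat_floor_divide_bounds:
  fixes s h :: real
  assumes "0 < h" "0 \<le> s"
  shows "real (nat \<lfloor>s/h\<rfloor>) * h \<le> s" "s < real (nat \<lfloor>s/h\<rfloor>) * h + h"
proof -
  have fl: "of_int \<lfloor>s/h\<rfloor> \<le> s/h" "s/h < of_int \<lfloor>s/h\<rfloor> + 1" by linarith+
  have "of_int \<lfloor>s/h\<rfloor> * h \<le> s" using mult_right_mono[OF fl(1), of h] assms(1) by simp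
  moreover have "s < (of_int \<lfloor>s/h\<rfloor> + 1) * h" using mult_strict_right_mono[OF fl(2) assms(1)] assms(1) by simp
  moreover have "real (nat \<lfloor>s/h\<rfloor>) = of_int \<lfloor>s/h\<rfloor>" using assms by simp
  ultimately show "real (nat \<lfloor>s/h\<rfloor>) * h \<le> s" "s < real (nat \<lfloor>s/h\<rfloor>) * h + h"
    by (simp_all add: distrib_right)
qed

lemma euler_iter_in_cball:
  assumes "\<forall>x\<in>cball x0 R. norm (G x) \<le> M" "0 < h" "0 < M" "0 \<le> \<tau>" "\<tau> \<le> R/M" "l \<le> nat \<lfloor>\<tau>/h\<rfloor>"
  shows "euler_iter G h x0 l \<in> cball x0 R"
proof -
  have "real l * h \<le> real (nat \<lfloor>\<tau>/h\<rfloor>) * h" using assms(2,6) by simp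
  also have "\<dots> \<le> \<tau>" using nat_floor_divide_bounds(1)[OF assms(2,4)] .
  finally have "real l * h * M \<le> \<tau> * M" using assms(3) by (simp add: mult_right_mono)
  also have "\<dots> \<le> R" using assms(3,5) by (simp add: field_simps)
  finally have "real l * h * M \<le> R" .
  moreover have "dist x0 (euler_iter G h x0 l) \<le> real l * h * M"
    using dist_euler_iter_le[OF assms(1)] assms(2,3) \<open>real l * h * M \<le> R\<close> by simp
  ultimately show ?thesis by simp
qed

lemma euler_step_function_estimate:
  fixes G :: "'a::real_normed_vector \<Rightarrow> 'a"
  assumes bnd: "\<forall>x\<in>cball x0 R. norm (G x) \<le> M" and "0 < M" "0 < h" "0 \<le> \<epsilon>"
    and uc: "\<forall>z\<in>cball x0 R. \<forall>z'\<in>cball x0 R. dist z z' < \<eta> \<longrightarrow> norm (G z - G z') \<le> \<epsilon>"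
    and s: "s \<in> {0..R/M}" and t: "t \<in> {0..R/M}" and small: "(\<bar>t - s\<bar> + h) * M < \<eta>"
  defines "a \<equiv> nat \<lfloor>s/h\<rfloor>" and "b \<equiv> nat \<lfloor>t/h\<rfloor>"
  shows "norm (euler_iter G h x0 b - euler_iter G h x0 a - (t - s) *\<^sub>R G (euler_iter G h x0 a))
           \<le> h * M + (\<bar>t - s\<bar> + h) * \<epsilon>"
proof -
  let ?E = "euler_iter G h x0"
  have in_cball: "?E l \<in> cball x0 R" if "l \<le> max a b" for l
  proof -
    have "l \<le> nat \<lfloor>s/h\<rfloor> \<or> l \<le> nat \<lfloor>t/h\<rfloor>" using that unfolding a_def b_def by linarith
    then show ?thesis using s t euler_iter_in_cball[OF bnd \<open>0 < h\<close> \<open>0 < M\<close>] by auto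
  qed
  have steps: "\<bar>real b - real a\<bar> * h < \<bar>t - s\<bar> + h" "\<bar>(real b - real a) * h - (t - s)\<bar> \<le> h"
    using nat_floor_divide_bounds[OF \<open>0 < h\<close>, of s] nat_floor_divide_bounds[OF \<open>0 < h\<close>, of t] s t
    unfolding a_def b_def by (auto simp: abs_if algebra_simps)
  define c where "c = G (?E a)"
  have "norm c \<le> M" using bnd in_cball[of a] unfolding c_def by simp
  have near_c: "norm (G (?E l) - c) \<le> \<epsilon>" if "min a b \<le> l" "l \<le> max a b" for l
  proof -
    have "norm (?E l - ?E a - ((real l - real a) * h) *\<^sub>R 0) \<le> \<bar>real l - real a\<bar> * h * M"
      using in_cball bnd \<open>0 < h\<close> that by (intro euler_iter_deviation) auto
    then have "dist (?E l) (?E a) \<le> \<bar>real l - real a\<bar> * h * M" by (simp add: dist_norm)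
    also have "\<dots> \<le> \<bar>real b - real a\<bar> * h * M"
      using that \<open>0 < h\<close> \<open>0 < M\<close> by (intro mult_right_mono) (auto simp: abs_if)
    also have "\<dots> < \<eta>"
      using steps(1) small \<open>0 < M\<close> by (smt (verit) mult_strict_right_mono)
    finally show ?thesis unfolding c_def using uc in_cball that by auto
  qed
  have "?E b - ?E a - (t - s) *\<^sub>R c
      = (?E b - ?E a - ((real b - real a) * h) *\<^sub>R c) + ((real b - real a) * h - (t - s)) *\<^sub>R c"
    by (simp add: algebra_simps)
  also have "norm \<dots> \<le> \<bar>real b - real a\<bar> * h * \<epsilon> + h * M"
  proof (rule norm_triangle_mono)
    show "norm (?E b - ?E a - ((real b - real a) * h) *\<^sub>R c) \<le> \<bar>real b - real a\<bar> * h * \<epsilon>"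
      using near_c \<open>0 < h\<close> by (intro euler_iter_deviation) auto
    show "norm (((real b - real a) * h - (t - s)) *\<^sub>R c) \<le> h * M"
      using steps(2) \<open>norm c \<le> M\<close> \<open>0 < h\<close> by (auto intro: mult_mono)
  qed
  also have "\<dots> \<le> h * M + (\<bar>t - s\<bar> + h) * \<epsilon>"
    using mult_right_mono[OF less_imp_le[OF steps(1)] \<open>0 \<le> \<epsilon>\<close>] by simp
  finally show ?thesis unfolding c_def .
qed

lemma pointwise_cluster_function:
  fixes xs :: "nat \<Rightarrow> 'a \<Rightarrow> 'b::metric_space"
  assumes "compact K" "\<And>k t. xs k t \<in> K"
  shows "\<exists>p. (\<forall>t. p t \<in> K) \<and>
           (\<forall>s t \<gamma> N. 0 < \<gamma> \<longrightarrow> (\<exists>k\<ge>N. dist (xs k s) (p s) < \<gamma> \<and> dist (xs k t) (p t) < \<gamma>))"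
proof -
  have "compact (PiE UNIV (\<lambda>_. K) :: ('a \<Rightarrow> 'b) set)"
    using compactin_PiE[of "\<lambda>_. euclidean" UNIV "\<lambda>_. K"] assms(1)
    by (simp add: euclidean_product_topology)
  moreover have "\<forall>\<^sub>F f in filtermap xs sequentially. f \<in> PiE UNIV (\<lambda>_. K)"
    using assms(2) by (auto simp: eventually_filtermap PiE_iff)
  ultimately obtain p where "p \<in> PiE UNIV (\<lambda>_. K)" and p: "inf (nhds p) (filtermap xs sequentially) \<noteq> bot"
    unfolding compact_filter by (metis filtermap_bot_iff trivial_limit_sequentially)
  show ?thesis
  proof (intro exI[of _ p] conjI allI impI)
    show "p t \<in> K" for t using \<open>p \<in> PiE UNIV (\<lambda>_. K)\<close> by auto
    fix s t \<gamma> N assume "(0::real) < \<gamma>"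
    define U where "U = {f. \<forall>i\<in>{s, t}. f (id i) \<in> ball (p i) \<gamma>}"
    have "open U" unfolding U_def by (rule product_topology_basis') auto
    then have "\<forall>\<^sub>F f in nhds p. f \<in> U"
      using \<open>0 < \<gamma>\<close> by (intro eventually_nhds_in_open) (auto simp: U_def)
    moreover have "\<forall>\<^sub>F f in filtermap xs sequentially. f \<in> xs ` {N..}"
      unfolding eventually_filtermap using eventually_ge_at_top[of N] by (rule eventually_mono) auto
    ultimately have "\<forall>\<^sub>F f in inf (nhds p) (filtermap xs sequentially). f \<in> U \<and> f \<in> xs ` {N..}"
      by (simp add: eventually_inf) blast
    then obtain f where "f \<in> U" "f \<in> xs ` {N..}"
      using eventually_happens'[OF p] by blast
    then show "\<exists>k\<ge>N. dist (xs k s) (p s) < \<gamma> \<and> dist (xs k t) (p t) < \<gamma>"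
      unfolding U_def by (auto simp: dist_commute)
  qed
qed

lemma norm_increment_perturb:
  fixes p y :: "real \<Rightarrow> 'a::real_normed_vector"
  assumes "dist (y s) (p s) \<le> \<gamma>" "dist (y t) (p t) \<le> \<gamma>" "norm (G (y s) - G (p s)) \<le> \<epsilon>"
    and "norm (y t - y s - (t - s) *\<^sub>R G (y s)) \<le> B"
  shows "norm (p t - p s - (t - s) *\<^sub>R G (p s)) \<le> 2 * \<gamma> + B + \<bar>t - s\<bar> * \<epsilon>"
proof -
  have "norm (p t - p s - (t - s) *\<^sub>R G (p s))
      = norm ((p t - y t) + (y s - p s) + (y t - y s - (t - s) *\<^sub>R G (y s)) + (t - s) *\<^sub>R (G (y s) - G (p s)))"
    by (simp add: algebra_simps)
  also have "\<dots> \<le> \<gamma> + \<gamma> + B + \<bar>t - s\<bar> * \<epsilon>"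
    using assms by (intro norm_triangle_mono)
      (simp_all add: dist_norm norm_minus_commute mult_left_mono)
  finally show ?thesis by simp
qed

lemma has_vector_derivative_within_estimate:
  fixes x :: "real \<Rightarrow> 'a::real_normed_vector"
  assumes "\<And>\<epsilon>. 0 < \<epsilon> \<Longrightarrow> \<exists>d>0. \<forall>t\<in>S. \<bar>t - s\<bar> < d \<longrightarrow> norm (x t - x s - (t - s) *\<^sub>R v) \<le> \<epsilon> * \<bar>t - s\<bar>"
  shows "(x has_vector_derivative v) (at s within S)"
  unfolding has_vector_derivative_def has_derivative_within_alt
  using assms by (auto intro: bounded_linear_scaleR_left)

lemma euler_limit_increment_estimate:
  fixes G :: "'a::real_normed_vector \<Rightarrow> 'a"
  assumes bnd: "\<forall>x\<in>cball x0 R. norm (G x) \<le> M" and "0 < M" "0 \<le> \<epsilon>"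
    and uc: "\<forall>z\<in>cball x0 R. \<forall>z'\<in>cball x0 R. dist z z' < \<eta> \<longrightarrow> norm (G z - G z') \<le> \<epsilon>"
    and s: "s \<in> {0..R/M}" and t: "t \<in> {0..R/M}" and close: "2 * \<bar>t - s\<bar> * M < \<eta>"
    and "p s \<in> cball x0 R"
    and approx: "\<And>\<gamma>. 0 < \<gamma> \<Longrightarrow> \<exists>h. 0 < h \<and> h < \<gamma> \<and>
                    dist (euler_iter G h x0 (nat \<lfloor>s/h\<rfloor>)) (p s) < \<gamma> \<and>
                    dist (euler_iter G h x0 (nat \<lfloor>t/h\<rfloor>)) (p t) < \<gamma>"
  shows "norm (p t - p s - (t - s) *\<^sub>R G (p s)) \<le> 2 * \<epsilon> * \<bar>t - s\<bar>"
proof -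
  let ?A = "norm (p t - p s - (t - s) *\<^sub>R G (p s))"
  let ?K = "2 + M + \<epsilon>"
  have "0 < \<eta>" using close \<open>0 < M\<close> by (smt (verit) mult_nonneg_nonneg abs_ge_zero)
  have bound: "?A \<le> 2 * \<epsilon> * \<bar>t - s\<bar> + \<gamma> * ?K" if "0 < \<gamma>" "\<gamma> < min \<eta> (\<eta> / (2 * M))" for \<gamma>
  proof -
    obtain h where "0 < h" "h < \<gamma>"
      and h: "dist (euler_iter G h x0 (nat \<lfloor>s/h\<rfloor>)) (p s) < \<gamma>" "dist (euler_iter G h x0 (nat \<lfloor>t/h\<rfloor>)) (p t) < \<gamma>"
      using approx[OF \<open>0 < \<gamma>\<close>] by blast
    have "(\<bar>t - s\<bar> + h) * M < \<eta>"
    proof -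
      have "h * M < \<gamma> * M" using \<open>h < \<gamma>\<close> \<open>0 < M\<close> by simp
      moreover have "\<gamma> * M < \<eta> / 2" using that(2) \<open>0 < M\<close> by (simp add: field_simps)
      ultimately have "h * M < \<eta> / 2" by linarith
      then show ?thesis using close by (simp add: algebra_simps)
    qed
    then have step: "norm (euler_iter G h x0 (nat \<lfloor>t/h\<rfloor>) - euler_iter G h x0 (nat \<lfloor>s/h\<rfloor>)
        - (t - s) *\<^sub>R G (euler_iter G h x0 (nat \<lfloor>s/h\<rfloor>))) \<le> h * M + (\<bar>t - s\<bar> + h) * \<epsilon>"
      using s t by (intro euler_step_function_estimate[OF bnd \<open>0 < M\<close> \<open>0 < h\<close> \<open>0 \<le> \<epsilon>\<close> uc])
    have "norm (G (euler_iter G h x0 (nat \<lfloor>s/h\<rfloor>)) - G (p s)) \<le> \<epsilon>"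
      using uc \<open>p s \<in> cball x0 R\<close> euler_iter_in_cball[OF bnd \<open>0 < h\<close> \<open>0 < M\<close>, of s] s h(1) that(2)
      by auto
    then have "?A \<le> 2 * \<gamma> + (h * M + (\<bar>t - s\<bar> + h) * \<epsilon>) + \<bar>t - s\<bar> * \<epsilon>"
      using h step by (intro norm_increment_perturb) auto
    also have "\<dots> \<le> 2 * \<epsilon> * \<bar>t - s\<bar> + \<gamma> * ?K"
      using add_mono[OF mult_right_mono[of h \<gamma> M] mult_right_mono[of h \<gamma> \<epsilon>]] \<open>h < \<gamma>\<close> \<open>0 < M\<close> \<open>0 \<le> \<epsilon>\<close>
      by (simp add: algebra_simps)
    finally show ?thesis .
  qed
  show ?thesis
  proof (rule tendsto_le[OF trivial_limit_at_right_real])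
    show "((\<lambda>\<gamma>. 2 * \<epsilon> * \<bar>t - s\<bar> + \<gamma> * ?K) \<longlongrightarrow> 2 * \<epsilon> * \<bar>t - s\<bar>) (at_right 0)"
      by (auto intro!: tendsto_eq_intros)
    show "\<forall>\<^sub>F \<gamma> in at_right 0. ?A \<le> 2 * \<epsilon> * \<bar>t - s\<bar> + \<gamma> * ?K"
      unfolding eventually_at_right_field using bound \<open>0 < \<eta>\<close> \<open>0 < M\<close>
      by (intro exI[of _ "min \<eta> (\<eta> / (2 * M))"]) auto
  qed simp
qed

lemma euler_cluster_function:
  fixes G :: "'a::euclidean_space \<Rightarrow> 'a"
  assumes bnd: "\<forall>x\<in>cball x0 R. norm (G x) \<le> M" and "0 \<le> R" "0 < M"
  obtains p where "p 0 = x0" "\<forall>t. p t \<in> cball x0 R"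
    "\<And>s t \<gamma>. s \<in> {0..R/M} \<Longrightarrow> t \<in> {0..R/M} \<Longrightarrow> 0 < \<gamma> \<Longrightarrow> \<exists>h. 0 < h \<and> h < \<gamma> \<and>
       dist (euler_iter G h x0 (nat \<lfloor>s/h\<rfloor>)) (p s) < \<gamma> \<and> dist (euler_iter G h x0 (nat \<lfloor>t/h\<rfloor>)) (p t) < \<gamma>"
proof -
  define \<delta> where "\<delta> = R/M"
  define hk where "hk k = 1 / (real k + 1)" for k :: nat
  have "0 < hk k" for k unfolding hk_def by simp
  txt \<open>Euler step functions, frozen outside [0, \<delta>] so that all their values lie in the ball.\<close>
  define xs where "xs k t = euler_iter G (hk k) x0 (nat \<lfloor>max 0 (min t \<delta>) / hk k\<rfloor>)" for k t
  have xs_in: "xs k t \<in> cball x0 R" for k t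
    unfolding xs_def using \<open>0 \<le> R\<close> \<open>0 < M\<close>
    by (intro euler_iter_in_cball[OF bnd \<open>0 < hk k\<close> \<open>0 < M\<close>, of "max 0 (min t \<delta>)"])
      (auto simp: \<delta>_def)
  have xs_eq: "xs k \<tau> = euler_iter G (hk k) x0 (nat \<lfloor>\<tau> / hk k\<rfloor>)" if "\<tau> \<in> {0..\<delta>}" for k \<tau>
    unfolding xs_def using that by simp
  obtain p where p_in: "\<forall>t. p t \<in> cball x0 R"
    and p_cluster: "\<And>s t \<gamma> N. 0 < \<gamma> \<Longrightarrow> \<exists>k\<ge>N. dist (xs k s) (p s) < \<gamma> \<and> dist (xs k t) (p t) < \<gamma>"
    using pointwise_cluster_function[where xs = xs and K = "cball x0 R"] compact_cball xs_in by blast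
  have "p 0 = x0"
  proof (rule ccontr)
    assume "p 0 \<noteq> x0"
    have "xs k 0 = x0" for k unfolding xs_def using \<open>0 \<le> R\<close> \<open>0 < M\<close> by (simp add: \<delta>_def)
    then show False
      using p_cluster[of "dist x0 (p 0)" 0 0 0] \<open>p 0 \<noteq> x0\<close> by auto
  qed
  moreover have "\<exists>h. 0 < h \<and> h < \<gamma> \<and> dist (euler_iter G h x0 (nat \<lfloor>s/h\<rfloor>)) (p s) < \<gamma> \<and>
                  dist (euler_iter G h x0 (nat \<lfloor>t/h\<rfloor>)) (p t) < \<gamma>"
    if "s \<in> {0..\<delta>}" "t \<in> {0..\<delta>}" "0 < \<gamma>" for s t \<gamma>
  proof -
    obtain N :: nat where "1/\<gamma> < real N" using reals_Archimedean2 by blast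
    obtain k where "N \<le> k" "dist (xs k s) (p s) < \<gamma>" "dist (xs k t) (p t) < \<gamma>"
      using p_cluster[OF \<open>0 < \<gamma>\<close>] by blast
    moreover have "hk k < \<gamma>"
    proof -
      have "1/\<gamma> < real k + 1" using \<open>1/\<gamma> < real N\<close> \<open>N \<le> k\<close> of_nat_mono[OF \<open>N \<le> k\<close>] by linarith
      then show ?thesis unfolding hk_def using \<open>0 < \<gamma>\<close> by (simp add: field_simps)
    qed
    ultimately show ?thesis
      using \<open>0 < hk k\<close> xs_eq[OF that(1), of k] xs_eq[OF that(2), of k]
      by (intro exI[of _ "hk k"]) simp
  qed
  ultimately show ?thesis using that p_in unfolding \<delta>_def by blast
qed

lemma peano_forward:
  fixes G :: "'a::euclidean_space \<Rightarrow> 'a"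
  assumes cont: "continuous_on (cball x0 R) G" and "0 \<le> R" "0 < M"
    and bnd: "\<forall>x\<in>cball x0 R. norm (G x) \<le> M"
  obtains p where "p 0 = x0" "\<forall>s\<in>{0..R/M}. (p has_vector_derivative G (p s)) (at s within {0..R/M})"
proof -
  obtain p where "p 0 = x0" and p_in: "\<forall>t. p t \<in> cball x0 R"
    and approx: "\<And>s t \<gamma>. s \<in> {0..R/M} \<Longrightarrow> t \<in> {0..R/M} \<Longrightarrow> 0 < \<gamma> \<Longrightarrow> \<exists>h. 0 < h \<and> h < \<gamma> \<and>
       dist (euler_iter G h x0 (nat \<lfloor>s/h\<rfloor>)) (p s) < \<gamma> \<and> dist (euler_iter G h x0 (nat \<lfloor>t/h\<rfloor>)) (p t) < \<gamma>"
    using euler_cluster_function[OF bnd \<open>0 \<le> R\<close> \<open>0 < M\<close>] by blast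
  have "uniformly_continuous_on (cball x0 R) G"
    using cont by (rule compact_uniformly_continuous) simp
  have "(p has_vector_derivative G (p s)) (at s within {0..R/M})" if "s \<in> {0..R/M}" for s
  proof (rule has_vector_derivative_within_estimate)
    fix \<epsilon> :: real assume "0 < \<epsilon>"
    obtain \<eta> where "0 < \<eta>"
      and \<eta>: "\<And>z z'. z \<in> cball x0 R \<Longrightarrow> z' \<in> cball x0 R \<Longrightarrow> dist z' z < \<eta> \<Longrightarrow> dist (G z') (G z) < \<epsilon>/2"
      using \<open>uniformly_continuous_on (cball x0 R) G\<close> \<open>0 < \<epsilon>\<close>
      unfolding uniformly_continuous_on_def by (meson half_gt_zero)
    have uc: "\<forall>z\<in>cball x0 R. \<forall>z'\<in>cball x0 R. dist z z' < \<eta> \<longrightarrow> norm (G z - G z') \<le> \<epsilon>/2"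
      using \<eta> by (metis dist_commute dist_norm less_imp_le)
    show "\<exists>d>0. \<forall>t\<in>{0..R/M}. \<bar>t - s\<bar> < d \<longrightarrow> norm (p t - p s - (t - s) *\<^sub>R G (p s)) \<le> \<epsilon> * \<bar>t - s\<bar>"
    proof (intro exI[of _ "\<eta> / (2 * M)"] conjI ballI impI)
      show "0 < \<eta> / (2 * M)" using \<open>0 < \<eta>\<close> \<open>0 < M\<close> by simp
      fix t assume "t \<in> {0..R/M}" "\<bar>t - s\<bar> < \<eta> / (2 * M)"
      then have "2 * \<bar>t - s\<bar> * M < \<eta>" using \<open>0 < M\<close> by (simp add: field_simps)
      then have "norm (p t - p s - (t - s) *\<^sub>R G (p s)) \<le> 2 * (\<epsilon>/2) * \<bar>t - s\<bar>"
        using \<open>0 < \<epsilon>\<close> p_in approx[OF \<open>s \<in> {0..R/M}\<close> \<open>t \<in> {0..R/M}\<close>] \<open>s \<in> {0..R/M}\<close> \<open>t \<in> {0..R/M}\<close>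
        by (intro euler_limit_increment_estimate[OF bnd \<open>0 < M\<close> _ uc]) auto
      then show "norm (p t - p s - (t - s) *\<^sub>R G (p s)) \<le> \<epsilon> * \<bar>t - s\<bar>" by simp
    qed
  qed
  with \<open>p 0 = x0\<close> show ?thesis using that by blast
qed

lemma has_vector_derivative_glue_reversed:
  fixes p q :: "real \<Rightarrow> 'a::real_normed_vector"
  assumes "0 < \<delta>" "p 0 = q 0"
    and p: "\<forall>s\<in>{0..\<delta>}. (p has_vector_derivative G (p s)) (at s within {0..\<delta>})"
    and q: "\<forall>s\<in>{0..\<delta>}. (q has_vector_derivative - G (q s)) (at s within {0..\<delta>})"
    and t: "t \<in> {-\<delta><..<\<delta>}"
  defines "x \<equiv> \<lambda>t. if t \<in> {0..\<delta>} then p t else q (- t)"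
  shows "(x has_vector_derivative G (x t)) (at t)"
proof -
  have q': "((\<lambda>t. q (- t)) has_vector_derivative G (q (- t))) (at t within {-\<delta>..0})" if "t \<in> {-\<delta>..0}" for t
  proof -
    have d_uminus: "(uminus has_vector_derivative -1) (at t within {-\<delta>..0})"
      by (rule has_vector_derivative_minus[OF has_vector_derivative_id])
    have img: "uminus ` {-\<delta>..0} = {0..\<delta>}" by simp
    have "- t \<in> {0..\<delta>}" using that by simp
    then have "(q has_vector_derivative - G (q (- t))) (at (- t) within {0..\<delta>})" by (rule bspec[OF q])
    then have "((q \<circ> uminus) has_vector_derivative (-1) *\<^sub>R (- G (q (- t)))) (at t within {-\<delta>..0})"
      using vector_diff_chain_within[OF d_uminus] unfolding img by blast
    then show ?thesis by (simp add: o_def)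
  qed
  have cl: "closure {0..\<delta>} \<inter> closure {-\<delta>..0} = {0}" using \<open>0 < \<delta>\<close> by auto
  have S_cl: "{0..\<delta>} \<union> (closure {0..\<delta>} \<inter> closure {-\<delta>..0}) = {0..\<delta>}"
    and T_cl: "{-\<delta>..0} \<union> (closure {0..\<delta>} \<inter> closure {-\<delta>..0}) = {-\<delta>..0}"
    unfolding cl using \<open>0 < \<delta>\<close> by auto
  have "(x has_vector_derivative G (x t)) (at t within {-\<delta>..\<delta>})"
    unfolding x_def if_distrib[of G]
  proof (rule has_vector_derivative_If_within_closures[where S = "{0..\<delta>}" and T = "{-\<delta>..0}"
        and f = p and g = "\<lambda>t. q (- t)" and f' = "\<lambda>t. G (p t)" and g' = "\<lambda>t. G (q (- t))"])
    show "t \<in> {0..\<delta>} \<union> {-\<delta>..0}" "{-\<delta>..\<delta>} = {0..\<delta>} \<union> {-\<delta>..0}"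
      using t \<open>0 < \<delta>\<close> by auto
    show "(p has_vector_derivative G (p t)) (at t within {0..\<delta>} \<union> (closure {0..\<delta>} \<inter> closure {-\<delta>..0}))"
      if "t \<in> {0..\<delta>} \<union> (closure {0..\<delta>} \<inter> closure {-\<delta>..0})"
      using that unfolding S_cl by (rule p[rule_format])
    show "((\<lambda>t. q (- t)) has_vector_derivative G (q (- t))) (at t within {-\<delta>..0} \<union> (closure {0..\<delta>} \<inter> closure {-\<delta>..0}))"
      if "t \<in> {-\<delta>..0} \<union> (closure {0..\<delta>} \<inter> closure {-\<delta>..0})"
      using that unfolding T_cl by (rule q')
    show "p t = q (- t)" "G (p t) = G (q (- t))" if "t \<in> closure {0..\<delta>}" "t \<in> closure {-\<delta>..0}"
      using that \<open>p 0 = q 0\<close> by auto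
  qed
  moreover have "at t within {-\<delta>..\<delta>} = at t" using t by (intro at_within_interior) simp
  ultimately show ?thesis by simp
qed

lemma peano_local_existence:
  fixes G :: "'a::euclidean_space \<Rightarrow> 'a"
  assumes "continuous_on (cball x0 R) G" "0 < R"
  shows "\<exists>\<delta>>0. \<exists>x. x 0 = x0 \<and> (\<forall>t\<in>{-\<delta><..<\<delta>}. (x has_vector_derivative G (x t)) (at t))"
proof -
  obtain M where "0 < M" and bnd: "\<forall>x\<in>cball x0 R. norm (G x) \<le> M"
    using compact_imp_bounded[OF compact_continuous_image[OF assms(1) compact_cball]]
    unfolding bounded_pos by blast
  have "0 < R/M" using assms(2) \<open>0 < M\<close> by simp
  obtain p where "p 0 = x0" and p: "\<forall>s\<in>{0..R/M}. (p has_vector_derivative G (p s)) (at s within {0..R/M})"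
    using peano_forward[OF assms(1) less_imp_le[OF assms(2)] \<open>0 < M\<close> bnd] by blast
  have "continuous_on (cball x0 R) (\<lambda>x. - G x)" using assms(1) by (rule continuous_on_minus)
  moreover have "\<forall>x\<in>cball x0 R. norm (- G x) \<le> M" using bnd by simp
  ultimately obtain q where "q 0 = x0"
    and q: "\<forall>s\<in>{0..R/M}. (q has_vector_derivative - G (q s)) (at s within {0..R/M})"
    using peano_forward[OF _ less_imp_le[OF assms(2)] \<open>0 < M\<close>] by blast
  define x where "x = (\<lambda>t. if t \<in> {0..R/M} then p t else q (- t))"
  have "x 0 = x0" unfolding x_def using \<open>p 0 = x0\<close> \<open>0 < R/M\<close> by simp
  moreover have "p 0 = q 0" using \<open>p 0 = x0\<close> \<open>q 0 = x0\<close> by simp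
  then have "\<forall>t\<in>{-(R/M)<..<R/M}. (x has_vector_derivative G (x t)) (at t)"
    unfolding x_def using has_vector_derivative_glue_reversed[OF \<open>0 < R/M\<close> _ p q] by blast
  ultimately show ?thesis using \<open>0 < R/M\<close> by blast
qed

theorem proposition4p1:
  fixes f :: "real^'n \<Rightarrow> real^'m \<Rightarrow> real"
    and g :: "real^'n \<Rightarrow> real^'m \<Rightarrow> real^'p"
    and F :: "real^'n \<Rightarrow> real^'m \<Rightarrow> real^'n"
    and ustar :: "real^'n \<Rightarrow> real^'m"
    and x0 :: "real^'n"
  assumes "C0_2 f" and "C0_2 g"
    and "\<forall>x. strictly_convex_on UNIV (f x)"
    and "\<forall>x i. convex_on UNIV (\<lambda>u. g x u $ i)"
    and "\<forall>x. \<exists>u. is_minimizer f g x u"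
    and "\<forall>x. is_minimizer f g x (ustar x)"
    and "\<exists>uh. \<forall>i. g x0 uh $ i < 0"
    and "locally_lipschitz (\<lambda>z. F (fst z) (snd z))"
  shows "\<exists>\<delta>0>0. \<exists>x :: real \<Rightarrow> real^'n. x 0 = x0 \<and>
           (\<forall>t\<in>{-\<delta>0<..<\<delta>0}. (x has_vector_derivative F (x t) (ustar (x t))) (at t))"
proof -
  have cf: "continuous_on UNIV (\<lambda>z. f (fst z) (snd z))" using assms(1) unfolding C0_2_def by blast
  have cg: "continuous_on UNIV (\<lambda>z. g (fst z) (snd z))" using assms(2) unfolding C0_2_def by blast
  obtain uh where "\<forall>i. g x0 uh $ i < 0" using assms(7) by blast
  then obtain d where "0 < d" and slater: "\<And>x. dist x x0 < d \<Longrightarrow> \<forall>i. g x uh $ i < 0"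
    using eventually_nhds_strictly_feasible[OF cg] unfolding eventually_nhds_metric by blast
  have "continuous_on (cball x0 (d/2)) (\<lambda>x. F x (ustar x))"
  proof (intro continuous_at_imp_continuous_on ballI)
    fix x assume "x \<in> cball x0 (d/2)"
    then have "isCont ustar x"
      using slater[of x] \<open>0 < d\<close> assms(6) unfolding is_minimizer_def
      by (intro isCont_convex_minimizer[OF cf cg assms(3,4), where uh = uh]) (auto simp: dist_commute)
    then have "isCont (\<lambda>x. (x, ustar x)) x" by simp
    moreover have "isCont (\<lambda>z. F (fst z) (snd z)) (x, ustar x)"
      using assms(8) by (rule locally_lipschitz_imp_isCont)
    ultimately show "isCont (\<lambda>x. F x (ustar x)) x" using isCont_o2 by fastforce
  qed
  moreover have "0 < d/2" using \<open>0 < d\<close> by simp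
  ultimately show ?thesis by (rule peano_local_existence)
qed

end
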